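(* Let $N, N_y, M \in \mathbb{N}$, $X \in \mathbb{R}^{N \times M}$, $Y \in \mathbb{R}^{N_y \times M}$, $\lambda \ge 0$, and $\Omega = \{1,\dots,N\}$. For $S\subset\Omega$ with $X_SX_S^\top + \lambda I_{|S|} \succ 0$ let $J(S) = \operatorname{tr}\{ Y X_S^\top (X_S X_S^\top + \lambda I_{|S|})^{-1} X_S Y^\top \}$, with $J(\emptyset)=0$. Then for any $S \subset \Omega$ and $i \in \Omega\setminus S$ such that $P^{xx}_{S\cup\{i\},S\cup\{i\}} \succ 0$, \[ J(S\cup\{i\}) - J(S) = \frac{\| (Q^{xy}_i(S))^\top \|^2}{Q^{xx}_{i,i}(S)}. \]
   Context: Notation: for a matrix $A$ and an ordered index set $S=\{S_1,\dots,S_k\}$, $A_S$ is the matrix whose $j$th row is row $S_j$ of $A$; $A_{S,S}$ is the $k\times k$ matrix with $(j,l)$ entry $A_{S_j,S_l}$; $A_i$ is row $i$ of $A$, $A_{i,i}$ its $(i,i)$ entry; $\|\cdot\|$ is the Euclidean norm. Define $P^{xx} = XX^\top + \lambda I_N$ (so $P^{xx}_{S,S} = X_SX_S^\top+\lambda I_{|S|}$), $P^{xy} = XY^\top$. Define $Q^{xx}(\emptyset)=P^{xx}$, $Q^{xy}(\emptyset)=P^{xy}$, and for $|S|\ge1$ with $P^{xx}_{S,S}\succ0$: $Q^{xx}(S) = P^{xx} - (P^{xx}_S)^\top (P^{xx}_{S,S})^{-1} P^{xx}_S$, $Q^{xy}(S) = P^{xy} - (P^{xx}_S)^\top (P^{xx}_{S,S})^{-1}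 P^{xy}_S$. *)

theory Defs
  imports "Jordan_Normal_Form.DL_Submatrix"
begin

definition vnorm :: "real vec \<Rightarrow> real" where
  "vnorm v = sqrt (v \<bullet> v)"

definition mtrace :: "real mat \<Rightarrow> real" where
  "mtrace A = (\<Sum>k<dim_row A. A $$ (k,k))"

(* inverse of a square matrix (meaningful when it is invertible) *)
definition minv :: "real mat \<Rightarrow> real mat" where
  "minv A = (SOME B. B \<in> carrier_mat (dim_row A) (dim_row A) \<and> inverts_mat A B \<and> inverts_mat B A)"

definition pos_def :: "real mat \<Rightarrow> bool" where
  "pos_def A \<longleftrightarrow> square_mat A \<and> A\<^sup>T = A \<and>
     (\<forall>x \<in> carrier_vec (dim_row A). x \<noteq> 0\<^sub>v (dim_row A) \<longrightarrow> x \<bullet> (A *\<^sub>v x) > 0)"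

(* A_S : rows of A indexed by S, in increasing order *)
definition rows_sel :: "real mat \<Rightarrow> nat set \<Rightarrow> real mat" where
  "rows_sel A S = submatrix A S {0..<dim_col A}"

definition sub_sq :: "real mat \<Rightarrow> nat set \<Rightarrow> real mat" where
  "sub_sq A S = submatrix A S S"

definition Pxx :: "real mat \<Rightarrow> real \<Rightarrow> real mat" where
  "Pxx X lam = X * X\<^sup>T + lam \<cdot>\<^sub>m 1\<^sub>m (dim_row X)"

definition Pxy :: "real mat \<Rightarrow> real mat \<Rightarrow> real mat" where
  "Pxy X Y = X * Y\<^sup>T"

definition Qxx :: "real mat \<Rightarrow> real \<Rightarrow> nat set \<Rightarrow> real mat" where
  "Qxx X lam S = (if S = {} then Pxx X lam
     else Pxx X lam - (rows_sel (Pxx X lam) S)\<^sup>T * minv (sub_sq (Pxx X lam) S) * rows_sel (Pxx X lam) S)"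

definition Qxy :: "real mat \<Rightarrow> real mat \<Rightarrow> real \<Rightarrow> nat set \<Rightarrow> real mat" where
  "Qxy X Y lam S = (if S = {} then Pxy X Y
     else Pxy X Y - (rows_sel (Pxx X lam) S)\<^sup>T * minv (sub_sq (Pxx X lam) S) * rows_sel (Pxy X Y) S)"

definition Jfun :: "real mat \<Rightarrow> real mat \<Rightarrow> real \<Rightarrow> nat set \<Rightarrow> real" where
  "Jfun X Y lam S = (if S = {} then 0
     else mtrace (Y * (rows_sel X S)\<^sup>T
                  * minv (rows_sel X S * (rows_sel X S)\<^sup>T + lam \<cdot>\<^sub>m 1\<^sub>m (card S))
                  * rows_sel X S * Y\<^sup>T))"

end

theory Submission
  imports Defs "Jordan_Normal_Form.Determinant"
begin

(* Write G_S for the inverse of P_{S,S}, padded with zeros to an N x N array, and b_j for the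
   columns of P^{xy}. Then J(S) = sum_j b_j' G_S b_j, Q^{xy}_{ij}(S) = b_{ij} - p_i' G_S b_j and
   Q^{xx}_{ii}(S) = p_ii - p_i' G_S p_i =: s, the Schur complement of P_{S,S} in P_{T,T} for
   T = S + {i}. With u = e_i - G_S p_i one checks directly that G_S + u u' / s inverts P on T;
   positive definiteness on T makes such an inverse unique and gives s = u' P u > 0. Hence
   J(T) - J(S) = sum_j (u' b_j)^2 / s, and u' b_j = Q^{xy}_{ij}(S). *)

section \<open>Enumerating a finite index set\<close>

definition pick_index :: "nat set \<Rightarrow> nat \<Rightarrow> nat" where
  "pick_index S r = card {a \<in> S. a < r}"

lemma pick_index_less_card: "finite S \<Longrightarrow> r \<in> S \<Longrightarrow> pick_index S r < card S"
  unfolding pick_index_def by (rule psubset_card_mono) auto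

lemma pick_pick_index: "r \<in> S \<Longrightarrow> pick S (pick_index S r) = r"
  unfolding pick_index_def by (rule pick_card_in_set)

lemma pick_index_pick: "a < card S \<Longrightarrow> pick_index S (pick S a) = a"
  unfolding pick_index_def by (rule card_pick_le)

lemma bij_betw_pick: "finite S \<Longrightarrow> bij_betw (pick S) {..<card S} S"
  by (rule bij_betw_byWitness[where f' = "pick_index S"])
    (auto simp: pick_index_pick pick_pick_index pick_in_set_le pick_index_less_card)

lemma sum_lessThan_eq_sum_pick:
  assumes S: "S \<subseteq> {0..<N}" and supp: "\<And>r. r < N \<Longrightarrow> r \<notin> S \<Longrightarrow> f r = 0"
  shows "(\<Sum>r<N. f r) = (\<Sum>a<card S. f (pick S a))"
proof -
  have fin: "finite S" using S finite_subset by blast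
  have "(\<Sum>r<N. f r) = sum f S"
    using S supp by (intro sum.mono_neutral_right) auto
  also have "\<dots> = (\<Sum>a<card S. f (pick S a))"
    by (rule sum.reindex_bij_betw[OF bij_betw_pick[OF fin], symmetric])
  finally show ?thesis .
qed

lemma card_lessThan_restrict: "S \<subseteq> {0..<N} \<Longrightarrow> card {r. r < N \<and> r \<in> S} = card S"
  by (metis (no_types, lifting) Collect_cong Collect_mem_eq atLeastLessThan_iff subset_iff)

lemma pick_atLeastLessThan: "c < n \<Longrightarrow> pick {0..<n} c = c"
proof -
  assume c: "c < n"
  have range: "{a. a < n \<and> a \<in> UNIV} = {0..<n}" by auto
  have "pick UNIV c = pick {a. a < n \<and> a \<in> UNIV} c"
    by (rule pick_reduce_set) (use c range in auto)
  then show ?thesis using range pick_UNIV by simp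
qed

lemma rows_sel_carrier:
  "A \<in> carrier_mat N n \<Longrightarrow> S \<subseteq> {0..<N} \<Longrightarrow> rows_sel A S \<in> carrier_mat (card S) n"
  using card_lessThan_restrict unfolding rows_sel_def carrier_mat_def by (auto simp: dim_submatrix)

lemma rows_sel_index:
  assumes A: "A \<in> carrier_mat N n" and S: "S \<subseteq> {0..<N}" and "a < card S" "c < n"
  shows "rows_sel A S $$ (a, c) = A $$ (pick S a, c)"
proof -
  have cols: "dim_col A = n" using A by simp
  have "rows_sel A S $$ (a, c) = A $$ (pick S a, pick {0..<n} c)"
    unfolding rows_sel_def cols using assms card_lessThan_restrict[OF S] card_lessThan_restrict[of "{0..<n}" n]
    by (intro submatrix_index) auto
  then show ?thesis using pick_atLeastLessThan assms by simp
qed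

lemma row_rows_sel:
  assumes "A \<in> carrier_mat N n" "S \<subseteq> {0..<N}" "a < card S"
  shows "row (rows_sel A S) a = row A (pick S a)"
proof -
  have "pick S a < N" using pick_in_set_le[OF assms(3)] assms(2) by auto
  then show ?thesis
    using assms rows_sel_carrier[OF assms(1,2)] by (intro eq_vecI) (auto simp: rows_sel_index)
qed

lemma rows_sel_mult:
  assumes A: "A \<in> carrier_mat N n" and B: "B \<in> carrier_mat n m" and S: "S \<subseteq> {0..<N}"
  shows "rows_sel (A * B) S = rows_sel A S * B"
proof -
  have "pick S a < N" if "a < card S" for a using pick_in_set_le[OF that] S by auto
  then show ?thesis
    using rows_sel_carrier[OF A S] rows_sel_carrier[OF mult_carrier_mat[OF A B] S] A B
    by (intro eq_matI) (auto simp: rows_sel_index[OF mult_carrier_mat[OF A B] S] row_rows_sel[OF A S])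
qed

lemma sub_sq_carrier:
  "A \<in> carrier_mat N N \<Longrightarrow> S \<subseteq> {0..<N} \<Longrightarrow> sub_sq A S \<in> carrier_mat (card S) (card S)"
  using card_lessThan_restrict unfolding sub_sq_def carrier_mat_def by (auto simp: dim_submatrix)

lemma sub_sq_index:
  assumes "A \<in> carrier_mat N N" "S \<subseteq> {0..<N}" "a < card S" "b < card S"
  shows "sub_sq A S $$ (a, b) = A $$ (pick S a, pick S b)"
  unfolding sub_sq_def using assms card_lessThan_restrict[OF assms(2)] by (intro submatrix_index) auto

section \<open>Quadratic forms on vectors supported by an index set\<close>

definition quad_form :: "(nat \<Rightarrow> nat \<Rightarrow> real) \<Rightarrow> nat \<Rightarrow> (nat \<Rightarrow> real) \<Rightarrow> real" where
  "quad_form p N v = (\<Sum>r<N. v r * (\<Sum>c<N. p r c * v c))"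

definition pos_def_on :: "(nat \<Rightarrow> nat \<Rightarrow> real) \<Rightarrow> nat \<Rightarrow> nat set \<Rightarrow> bool" where
  "pos_def_on p N T \<longleftrightarrow>
     (\<forall>v. (\<forall>k<N. k \<notin> T \<longrightarrow> v k = 0) \<longrightarrow> (\<exists>k<N. v k \<noteq> 0) \<longrightarrow> quad_form p N v > 0)"

lemma pos_def_on_subset: "pos_def_on p N T \<Longrightarrow> S \<subseteq> T \<Longrightarrow> pos_def_on p N S"
  unfolding pos_def_on_def by blast

lemma quad_form_sub_sq:
  assumes P: "P \<in> carrier_mat N N" and S: "S \<subseteq> {0..<N}"
    and supp: "\<And>r. r < N \<Longrightarrow> r \<notin> S \<Longrightarrow> v r = 0"
  shows "quad_form (\<lambda>r c. P $$ (r, c)) N v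
    = vec (card S) (\<lambda>a. v (pick S a)) \<bullet> (sub_sq P S *\<^sub>v vec (card S) (\<lambda>a. v (pick S a)))"
proof -
  have "quad_form (\<lambda>r c. P $$ (r, c)) N v
      = (\<Sum>a<card S. v (pick S a) * (\<Sum>c<N. P $$ (pick S a, c) * v c))"
    unfolding quad_form_def by (rule sum_lessThan_eq_sum_pick[OF S]) (simp add: supp)
  also have "\<dots> = (\<Sum>a<card S. v (pick S a) * (\<Sum>b<card S. sub_sq P S $$ (a, b) * v (pick S b)))"
    by (intro sum.cong refl arg_cong2[where f = "(*)"] trans[OF sum_lessThan_eq_sum_pick[OF S]])
      (auto simp: supp sub_sq_index[OF P S])
  also have "\<dots> = vec (card S) (\<lambda>a. v (pick S a)) \<bullet> (sub_sq P S *\<^sub>v vec (card S) (\<lambda>a. v (pick S a)))"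
    using sub_sq_carrier[OF P S]
    by (auto simp: scalar_prod_def mult_mat_vec_def row_def lessThan_atLeast0 intro!: sum.cong)
  finally show ?thesis .
qed

lemma pos_def_on_if_pos_def_sub_sq:
  assumes P: "P \<in> carrier_mat N N" and T: "T \<subseteq> {0..<N}" and pd: "pos_def (sub_sq P T)"
  shows "pos_def_on (\<lambda>r c. P $$ (r, c)) N T"
  unfolding pos_def_on_def
proof (intro allI impI)
  fix v :: "nat \<Rightarrow> real"
  assume supp: "\<forall>k<N. k \<notin> T \<longrightarrow> v k = 0" and "\<exists>k<N. v k \<noteq> 0"
  then obtain k where k: "k \<in> T" "v k \<noteq> 0" by blast
  define w where "w = vec (card T) (\<lambda>a. v (pick T a))"
  have fin: "finite T" using T finite_subset by blast
  have "w $ pick_index T k \<noteq> 0"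
    unfolding w_def using k pick_index_less_card[OF fin] pick_pick_index by simp
  then have "w \<noteq> 0\<^sub>v (card T)" using pick_index_less_card[OF fin k(1)] by auto
  then have "w \<bullet> (sub_sq P T *\<^sub>v w) > 0"
    using pd sub_sq_carrier[OF P T] unfolding pos_def_def w_def by auto
  then show "quad_form (\<lambda>r c. P $$ (r, c)) N v > 0"
    unfolding w_def using quad_form_sub_sq[OF P T] supp by simp
qed

lemma det_sub_sq_nonzero_if_pos_def_on:
  assumes P: "P \<in> carrier_mat N N" and S: "S \<subseteq> {0..<N}"
    and pd: "pos_def_on (\<lambda>r c. P $$ (r, c)) N S"
  shows "det (sub_sq P S) \<noteq> 0"
proof
  assume "det (sub_sq P S) = 0"
  then obtain w where w: "w \<in> carrier_vec (card S)" "w \<noteq> 0\<^sub>v (card S)"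
    and kernel: "sub_sq P S *\<^sub>v w = 0\<^sub>v (card S)"
    using det_0_iff_vec_prod_zero[OF sub_sq_carrier[OF P S]] by auto
  have fin: "finite S" using S finite_subset by blast
  define v where "v r = (if r \<in> S then w $ pick_index S r else 0)" for r
  have supp: "\<And>r. r < N \<Longrightarrow> r \<notin> S \<Longrightarrow> v r = 0" unfolding v_def by simp
  have compress: "vec (card S) (\<lambda>a. v (pick S a)) = w"
    using w(1) unfolding v_def by (intro eq_vecI) (auto simp: pick_in_set_le pick_index_pick)
  obtain a where a: "a < card S" "w $ a \<noteq> 0"
    using w by (metis eq_vecI carrier_vecD index_zero_vec(1,2))
  have "v (pick S a) \<noteq> 0" using a unfolding v_def by (simp add: pick_in_set_le pick_index_pick)
  moreover have "pick S a < N" using pick_in_set_le[OF a(1)] S by auto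
  ultimately have "quad_form (\<lambda>r c. P $$ (r, c)) N v > 0"
    using pd supp unfolding pos_def_on_def by blast
  moreover have "quad_form (\<lambda>r c. P $$ (r, c)) N v = 0"
    using quad_form_sub_sq[OF P S supp] compress kernel w(1) by simp
  ultimately show False by simp
qed

section \<open>Inverses supported by an index set\<close>

lemma minv_inverse:
  assumes A: "A \<in> carrier_mat n n" and det: "det A \<noteq> 0"
  shows "minv A \<in> carrier_mat n n" "A * minv A = 1\<^sub>m n"
proof -
  obtain B where B: "B \<in> carrier_mat n n" "B * A = 1\<^sub>m n" "A * B = 1\<^sub>m n"
    using det_non_zero_imp_unit[OF A det] unfolding Units_def by (auto simp: ring_mat_simps)
  then have "\<exists>B. B \<in> carrier_mat (dim_row A) (dim_row A) \<and> inverts_mat A B \<and> inverts_mat B A"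
    using A unfolding inverts_mat_def by auto
  then have "minv A \<in> carrier_mat (dim_row A) (dim_row A) \<and> inverts_mat A (minv A) \<and> inverts_mat (minv A) A"
    unfolding minv_def by (rule someI_ex)
  then show "minv A \<in> carrier_mat n n" "A * minv A = 1\<^sub>m n"
    using A unfolding inverts_mat_def by auto
qed

definition embed_sub_sq :: "nat set \<Rightarrow> real mat \<Rightarrow> nat \<Rightarrow> nat \<Rightarrow> real" where
  "embed_sub_sq S A r c = (if r \<in> S \<and> c \<in> S then A $$ (pick_index S r, pick_index S c) else 0)"

lemma sum_embed_sub_sq:
  assumes S: "S \<subseteq> {0..<N}"
  shows "(\<Sum>r<N. \<Sum>c<N. f r * embed_sub_sq S A r c * g c)
       = (\<Sum>a<card S. \<Sum>b<card S. f (pick S a) * A $$ (a, b) * g (pick S b))"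
proof -
  have "(\<Sum>r<N. \<Sum>c<N. f r * embed_sub_sq S A r c * g c)
      = (\<Sum>a<card S. \<Sum>b<card S. f (pick S a) * embed_sub_sq S A (pick S a) (pick S b) * g (pick S b))"
    by (intro trans[OF sum_lessThan_eq_sum_pick[OF S]] sum.cong refl sum_lessThan_eq_sum_pick[OF S])
      (auto simp: embed_sub_sq_def)
  then show ?thesis by (simp add: embed_sub_sq_def pick_in_set_le pick_index_pick)
qed

lemma rows_sel_bilinear_index:
  assumes P: "P \<in> carrier_mat N n1" and B: "B \<in> carrier_mat N n2" and S: "S \<subseteq> {0..<N}"
    and A: "A \<in> carrier_mat (card S) (card S)" and r: "r < n1" and c: "c < n2"
  shows "((rows_sel P S)\<^sup>T * A * rows_sel B S) $$ (r, c)
       = (\<Sum>k<N. \<Sum>l<N. P $$ (k, r) * embed_sub_sq S A k l * B $$ (l, c))"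
proof -
  have PS: "rows_sel P S \<in> carrier_mat (card S) n1" by (rule rows_sel_carrier[OF P S])
  have BS: "rows_sel B S \<in> carrier_mat (card S) n2" by (rule rows_sel_carrier[OF B S])
  have "((rows_sel P S)\<^sup>T * A * rows_sel B S) $$ (r, c)
      = (\<Sum>a<card S. rows_sel P S $$ (a, r) * (\<Sum>b<card S. A $$ (a, b) * rows_sel B S $$ (b, c)))"
    using PS A BS r c
    by (auto simp: scalar_prod_def lessThan_atLeast0 row_def col_def intro!: sum.cong)
  also have "\<dots> = (\<Sum>a<card S. \<Sum>b<card S. P $$ (pick S a, r) * A $$ (a, b) * B $$ (pick S b, c))"
    by (simp add: sum_distrib_left mult.assoc rows_sel_index[OF P S] rows_sel_index[OF B S] r c)
  finally show ?thesis by (simp add: sum_embed_sub_sq[OF S])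
qed

definition support_inverse ::
  "(nat \<Rightarrow> nat \<Rightarrow> real) \<Rightarrow> nat \<Rightarrow> nat set \<Rightarrow> (nat \<Rightarrow> nat \<Rightarrow> real) \<Rightarrow> bool" where
  "support_inverse p N S G \<longleftrightarrow>
     (\<forall>r<N. \<forall>c<N. \<not> (r \<in> S \<and> c \<in> S) \<longrightarrow> G r c = 0) \<and>
     (\<forall>r\<in>S. \<forall>c\<in>S. (\<Sum>k<N. p r k * G k c) = of_bool (r = c))"

lemma support_inverse_embed_sub_sq:
  assumes P: "P \<in> carrier_mat N N" and S: "S \<subseteq> {0..<N}"
    and A: "A \<in> carrier_mat (card S) (card S)" and inv: "sub_sq P S * A = 1\<^sub>m (card S)"
  shows "support_inverse (\<lambda>r c. P $$ (r, c)) N S (embed_sub_sq S A)"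
  unfolding support_inverse_def
proof (intro conjI ballI allI impI)
  fix r c assume "\<not> (r \<in> S \<and> c \<in> S)"
  then show "embed_sub_sq S A r c = 0" unfolding embed_sub_sq_def by auto
next
  fix r c assume r: "r \<in> S" and c: "c \<in> S"
  have fin: "finite S" using S finite_subset by blast
  note idx = pick_index_less_card[OF fin r] pick_index_less_card[OF fin c]
  have "(\<Sum>k<N. P $$ (r, k) * embed_sub_sq S A k c)
      = (\<Sum>b<card S. P $$ (r, pick S b) * embed_sub_sq S A (pick S b) c)"
    by (rule sum_lessThan_eq_sum_pick[OF S]) (auto simp: embed_sub_sq_def)
  also have "\<dots> = (\<Sum>b<card S. sub_sq P S $$ (pick_index S r, b) * A $$ (b, pick_index S c))"
    using r c idx
    by (intro sum.cong refl) (simp add: embed_sub_sq_def pick_in_set_le pick_index_pick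
        sub_sq_index[OF P S] pick_pick_index)
  also have "\<dots> = (sub_sq P S * A) $$ (pick_index S r, pick_index S c)"
    using sub_sq_carrier[OF P S] A idx
    by (auto simp: scalar_prod_def lessThan_atLeast0 row_def col_def intro!: sum.cong)
  also have "\<dots> = of_bool (r = c)"
    using inv idx r c by (auto dest: arg_cong[where f = "pick S"] simp: pick_pick_index)
  finally show "(\<Sum>k<N. P $$ (r, k) * embed_sub_sq S A k c) = of_bool (r = c)" .
qed

lemma support_inverse_minv:
  assumes P: "P \<in> carrier_mat N N" and S: "S \<subseteq> {0..<N}" and det: "det (sub_sq P S) \<noteq> 0"
  shows "support_inverse (\<lambda>r c. P $$ (r, c)) N S (embed_sub_sq S (minv (sub_sq P S)))"
  using minv_inverse[OF sub_sq_carrier[OF P S] det]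
  by (intro support_inverse_embed_sub_sq[OF P S]) auto

lemma support_inverse_sym:
  assumes p_sym: "\<And>r c. r < N \<Longrightarrow> c < N \<Longrightarrow> p r c = p c r"
    and S: "S \<subseteq> {0..<N}" and G: "support_inverse p N S G" and r: "r < N" and c: "c < N"
  shows "G r c = G c r"
proof -
  (* G = G' p G on S x S, and the right-hand side is symmetric *)
  define F where "F a b = (\<Sum>k<N. \<Sum>l<N. G k a * p k l * G l b)" for a b
  have G0: "\<And>r c. r < N \<Longrightarrow> c < N \<Longrightarrow> \<not> (r \<in> S \<and> c \<in> S) \<Longrightarrow> G r c = 0"
    and G1: "\<And>r c. r \<in> S \<Longrightarrow> c \<in> S \<Longrightarrow> (\<Sum>k<N. p r k * G k c) = of_bool (r = c)"
    using G unfolding support_inverse_def by auto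
  have F_sym: "F a b = F b a" for a b
  proof -
    have "F a b = (\<Sum>l<N. \<Sum>k<N. G k a * p k l * G l b)"
      unfolding F_def by (rule sum.swap)
    also have "\<dots> = F b a"
      unfolding F_def
    proof (intro sum.cong refl)
      fix l k assume "l \<in> {..<N}" "k \<in> {..<N}"
      then show "G k a * p k l * G l b = G l b * p l k * G k a"
        by (simp add: p_sym[of k l])
    qed
    finally show ?thesis .
  qed
  have GF: "G a b = F b a" if a: "a \<in> S" and b: "b \<in> S" for a b
  proof -
    have "a < N" "b < N" using a b S by auto
    then have "{..<N} \<inter> {k. k = a} = {a}" by auto
    then have "G a b = (\<Sum>k<N. of_bool (k = a) * G k b)" by simp
    also have "\<dots> = (\<Sum>k<N. (\<Sum>l<N. p k l * G l a) * G k b)"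
    proof (intro sum.cong refl)
      fix k assume "k \<in> {..<N}"
      then show "of_bool (k = a) * G k b = (\<Sum>l<N. p k l * G l a) * G k b"
        using G0[of k b] G1[of k a] a \<open>b < N\<close> by (cases "k \<in> S") auto
    qed
    also have "\<dots> = F b a"
      unfolding F_def by (simp add: sum_distrib_left sum_distrib_right mult_ac)
    finally show ?thesis .
  qed
  show ?thesis
    using G0[OF r c] G0[OF c r] GF F_sym by (cases "r \<in> S \<and> c \<in> S") auto
qed

lemma support_inverse_unique:
  assumes pd: "pos_def_on p N T"
    and G: "support_inverse p N T G" and H: "support_inverse p N T H"
    and r: "r < N" and c: "c < N"
  shows "G r c = H r c"
proof (cases "c \<in> T")
  case False
  then show ?thesis using G H r c unfolding support_inverse_def by auto
next
  case cT: True
  define v where "v k = G k c - H k c" for k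
  have supp: "\<forall>k<N. k \<notin> T \<longrightarrow> v k = 0"
    using G H c unfolding v_def support_inverse_def by auto
  have "v k * (\<Sum>l<N. p k l * v l) = 0" if "k < N" for k
  proof (cases "k \<in> T")
    case True
    have "(\<Sum>l<N. p k l * v l) = (\<Sum>l<N. p k l * G l c) - (\<Sum>l<N. p k l * H l c)"
      unfolding v_def by (simp add: right_diff_distrib sum_subtractf)
    also have "\<dots> = 0" using G H True cT unfolding support_inverse_def by simp
    finally show ?thesis by simp
  qed (use supp that in simp)
  then have "quad_form p N v = 0" unfolding quad_form_def by (auto intro!: sum.neutral)
  moreover have "(\<exists>k<N. v k \<noteq> 0) \<Longrightarrow> quad_form p N v > 0"
    using pd supp unfolding pos_def_on_def by blast
  ultimately have "\<not> (\<exists>k<N. v k \<noteq> 0)" by auto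
  then show ?thesis using r unfolding v_def by simp
qed

section \<open>Bordering the index set by one element\<close>

definition schur_complement :: "(nat \<Rightarrow> nat \<Rightarrow> real) \<Rightarrow> nat \<Rightarrow> (nat \<Rightarrow> nat \<Rightarrow> real) \<Rightarrow> nat \<Rightarrow> real" where
  "schur_complement p N G i = p i i - (\<Sum>r<N. \<Sum>c<N. p r i * G r c * p c i)"

definition border_vector :: "(nat \<Rightarrow> nat \<Rightarrow> real) \<Rightarrow> nat \<Rightarrow> (nat \<Rightarrow> nat \<Rightarrow> real) \<Rightarrow> nat \<Rightarrow> nat \<Rightarrow> real" where
  "border_vector p N G i k = of_bool (k = i) - (\<Sum>l<N. G k l * p l i)"

context
  fixes p G :: "nat \<Rightarrow> nat \<Rightarrow> real" and N i :: nat and S :: "nat set"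
  assumes p_sym: "\<And>r c. r < N \<Longrightarrow> c < N \<Longrightarrow> p r c = p c r"
    and S: "S \<subseteq> {0..<N}" and i: "i < N" "i \<notin> S"
    and G: "support_inverse p N S G"
begin

private lemma G_outside: "r < N \<Longrightarrow> c < N \<Longrightarrow> \<not> (r \<in> S \<and> c \<in> S) \<Longrightarrow> G r c = 0"
  using G unfolding support_inverse_def by auto

private lemma G_sym: "r < N \<Longrightarrow> c < N \<Longrightarrow> G r c = G c r"
  by (rule support_inverse_sym[OF p_sym S G])

private lemma p_G_row: "r \<in> S \<Longrightarrow> c < N \<Longrightarrow> (\<Sum>k<N. p r k * G k c) = of_bool (r = c)"
  using G i unfolding support_inverse_def by (cases "c \<in> S") (auto intro!: sum.neutral)

lemma border_vector_outside: "k < N \<Longrightarrow> k \<notin> insert i S \<Longrightarrow> border_vector p N G i k = 0"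
  unfolding border_vector_def using G_outside i by (auto intro!: sum.neutral)

lemma border_vector_at: "border_vector p N G i i = 1"
  unfolding border_vector_def using G_outside i by (auto intro!: sum.neutral)

lemma sum_border_vector:
  "(\<Sum>k<N. b k * border_vector p N G i k) = b i - (\<Sum>r<N. \<Sum>c<N. p r i * G r c * b c)"
proof -
  have "(\<Sum>k<N. b k * border_vector p N G i k) = b i - (\<Sum>k<N. \<Sum>l<N. b k * G k l * p l i)"
    using i unfolding border_vector_def
    by (simp add: right_diff_distrib sum_subtractf sum_distrib_left mult.assoc)
  also have "(\<Sum>k<N. \<Sum>l<N. b k * G k l * p l i) = (\<Sum>l<N. \<Sum>k<N. b k * G k l * p l i)"
    by (rule sum.swap)
  also have "\<dots> = (\<Sum>r<N. \<Sum>c<N. p r i * G r c * b c)"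
  proof (intro sum.cong refl)
    fix r c assume "r \<in> {..<N}" "c \<in> {..<N}"
    then show "b c * G c r * p r i = p r i * G r c * b c" by (simp add: G_sym[of c r] mult_ac)
  qed
  finally show ?thesis .
qed

lemma p_border_vector:
  "r \<in> S \<Longrightarrow> (\<Sum>k<N. p r k * border_vector p N G i k) = 0"
  "(\<Sum>k<N. p i k * border_vector p N G i k) = schur_complement p N G i"
proof -
  assume r: "r \<in> S"
  have rN: "r < N" using r S by auto
  have "(\<Sum>a<N. \<Sum>c<N. p a i * G a c * p r c) = (\<Sum>a<N. p a i * (\<Sum>c<N. p r c * G c a))"
    unfolding sum_distrib_left
  proof (intro sum.cong refl)
    fix a c assume "a \<in> {..<N}" "c \<in> {..<N}"
    then show "p a i * G a c * p r c = p a i * (p r c * G c a)" by (simp add: G_sym[of a c])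
  qed
  also have "\<dots> = (\<Sum>a<N. p a i * of_bool (r = a))"
    by (simp add: p_G_row r)
  also have "\<dots> = p r i"
  proof -
    have "{..<N} \<inter> {a. r = a} = {r}" using rN by auto
    then show ?thesis by simp
  qed
  finally show "(\<Sum>k<N. p r k * border_vector p N G i k) = 0"
    by (simp add: sum_border_vector)
next
  have "(\<Sum>a<N. \<Sum>c<N. p a i * G a c * p i c) = (\<Sum>a<N. \<Sum>c<N. p a i * G a c * p c i)"
  proof (intro sum.cong refl)
    fix a c assume "c \<in> {..<N}"
    then show "p a i * G a c * p i c = p a i * G a c * p c i" using p_sym[of i c] i by simp
  qed
  then show "(\<Sum>k<N. p i k * border_vector p N G i k) = schur_complement p N G i"
    unfolding sum_border_vector schur_complement_def by simp
qed

lemma quad_form_border_vector: "quad_form p N (border_vector p N G i) = schur_complement p N G i"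
proof -
  have "quad_form p N (border_vector p N G i) = (\<Sum>r<N. of_bool (r = i) * schur_complement p N G i)"
    unfolding quad_form_def
  proof (intro sum.cong refl)
    fix r assume "r \<in> {..<N}"
    then consider "r \<notin> insert i S" | "r \<in> S" | "r = i" by blast
    then show "border_vector p N G i r * (\<Sum>c<N. p r c * border_vector p N G i c)
      = of_bool (r = i) * schur_complement p N G i"
      using \<open>r \<in> {..<N}\<close> i border_vector_outside border_vector_at p_border_vector
      by cases auto
  qed
  also have "\<dots> = schur_complement p N G i"
  proof -
    have "{..<N} \<inter> {r. r = i} = {i}" using i by auto
    then show ?thesis by simp
  qed
  finally show ?thesis .
qed

lemma schur_complement_pos:
  assumes pd: "pos_def_on p N (insert i S)"
  shows "schur_complement p N G i > 0"
proof -
  have "\<forall>k<N. k \<notin> insert i S \<longrightarrow> border_vector p N G i k = 0"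
    using border_vector_outside by blast
  moreover have "\<exists>k<N. border_vector p N G i k \<noteq> 0"
    using border_vector_at i by auto
  ultimately show ?thesis
    using pd unfolding pos_def_on_def quad_form_border_vector[symmetric] by blast
qed

private lemma p_G_border_vector: "b \<in> S \<Longrightarrow> (\<Sum>k<N. p i k * G k b) = - border_vector p N G i b"
proof -
  assume b: "b \<in> S"
  have "(\<Sum>k<N. p i k * G k b) = (\<Sum>k<N. G b k * p k i)"
  proof (intro sum.cong refl)
    fix k assume "k \<in> {..<N}"
    then show "p i k * G k b = G b k * p k i"
      using p_sym[of i k] G_sym[of k b] i b S by auto
  qed
  then show ?thesis using b i unfolding border_vector_def by auto
qed

lemma support_inverse_border_update:
  assumes pd: "pos_def_on p N (insert i S)"
  shows "support_inverse p N (insert i S)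
    (\<lambda>a b. G a b + border_vector p N G i a * border_vector p N G i b / schur_complement p N G i)"
proof -
  define u where "u = border_vector p N G i"
  define s where "s = schur_complement p N G i"
  have s: "s \<noteq> 0" using schur_complement_pos[OF pd] unfolding s_def by simp
  have split: "(\<Sum>k<N. p a k * (G k b + u k * u b / s))
      = (\<Sum>k<N. p a k * G k b) + (\<Sum>k<N. p a k * u k) * u b / s" for a b
    by (simp add: distrib_left sum.distrib sum_distrib_right sum_divide_distrib mult.assoc)
  have "support_inverse p N (insert i S) (\<lambda>a b. G a b + u a * u b / s)"
    unfolding support_inverse_def
  proof (intro conjI ballI allI impI)
    fix a b assume "a < N" "b < N" "\<not> (a \<in> insert i S \<and> b \<in> insert i S)"
    then show "G a b + u a * u b / s = 0"
      unfolding u_def using G_outside border_vector_outside by auto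
  next
    fix a b assume a: "a \<in> insert i S" and b: "b \<in> insert i S"
    have bN: "b < N" using b i S by auto
    show "(\<Sum>k<N. p a k * (G k b + u k * u b / s)) = of_bool (a = b)"
    proof (cases "a \<in> S")
      case True
      then show ?thesis
        unfolding split using p_border_vector(1)[OF True] p_G_row[OF True bN] by (simp add: u_def)
    next
      case False
      then have "a = i" using a by simp
      have "(\<Sum>k<N. p i k * G k i) = 0"
        using G_outside i by (auto intro!: sum.neutral)
      then show ?thesis
        unfolding split \<open>a = i\<close> using p_border_vector(2) s b i p_G_border_vector border_vector_at
        by (cases "b = i") (auto simp: u_def s_def)
    qed
  qed
  then show ?thesis unfolding u_def s_def .
qed

lemma support_inverse_insert:
  assumes pd: "pos_def_on p N (insert i S)" and H: "support_inverse p N (insert i S) H"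
    and r: "r < N" and c: "c < N"
  shows "H r c = G r c + border_vector p N G i r * border_vector p N G i c / schur_complement p N G i"
  using support_inverse_unique[OF pd H support_inverse_border_update[OF pd] r c] .

lemma sum_quad_support_inverse_insert:
  assumes pd: "pos_def_on p N (insert i S)" and H: "support_inverse p N (insert i S) H"
  shows "(\<Sum>j<m. \<Sum>r<N. \<Sum>c<N. b r j * H r c * b c j) - (\<Sum>j<m. \<Sum>r<N. \<Sum>c<N. b r j * G r c * b c j)
    = (\<Sum>j<m. (b i j - (\<Sum>r<N. \<Sum>c<N. p r i * G r c * b c j))\<^sup>2) / schur_complement p N G i"
proof -
  define u where "u = border_vector p N G i"
  define s where "s = schur_complement p N G i"
  have "(\<Sum>r<N. \<Sum>c<N. b r j * H r c * b c j) - (\<Sum>r<N. \<Sum>c<N. b r j * G r c * b c j)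
      = (b i j - (\<Sum>r<N. \<Sum>c<N. p r i * G r c * b c j))\<^sup>2 / s" for j
  proof -
    have "(\<Sum>r<N. \<Sum>c<N. b r j * H r c * b c j) - (\<Sum>r<N. \<Sum>c<N. b r j * G r c * b c j)
        = (\<Sum>r<N. \<Sum>c<N. (b r j * u r) * (b c j * u c) / s)"
      unfolding sum_subtractf[symmetric] u_def s_def
      by (intro sum.cong refl) (simp add: support_inverse_insert[OF pd H] algebra_simps)
    also have "\<dots> = (\<Sum>r<N. b r j * u r)\<^sup>2 / s"
      by (simp add: sum_divide_distrib[symmetric] sum_product power2_eq_square)
    finally show ?thesis unfolding u_def sum_border_vector .
  qed
  then show ?thesis
    unfolding sum_subtractf[symmetric] s_def by (simp add: sum_divide_distrib)
qed

end

section \<open>The regression quantities\<close>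

lemma Pxx_carrier: "X \<in> carrier_mat N M \<Longrightarrow> Pxx X lam \<in> carrier_mat N N"
  unfolding Pxx_def by auto

lemma Pxy_carrier: "X \<in> carrier_mat N M \<Longrightarrow> Y \<in> carrier_mat Ny M \<Longrightarrow> Pxy X Y \<in> carrier_mat N Ny"
  unfolding Pxy_def by auto

lemma Pxx_sym: "X \<in> carrier_mat N M \<Longrightarrow> r < N \<Longrightarrow> c < N \<Longrightarrow> Pxx X lam $$ (r, c) = Pxx X lam $$ (c, r)"
  unfolding Pxx_def by (auto simp: scalar_prod_def mult.commute)

lemma sub_sq_Pxx:
  assumes X: "X \<in> carrier_mat N M" and S: "S \<subseteq> {0..<N}"
  shows "sub_sq (Pxx X lam) S = rows_sel X S * (rows_sel X S)\<^sup>T + lam \<cdot>\<^sub>m 1\<^sub>m (card S)"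
proof (rule eq_matI)
  have XS: "rows_sel X S \<in> carrier_mat (card S) M" by (rule rows_sel_carrier[OF X S])
  fix a b assume "a < dim_row (rows_sel X S * (rows_sel X S)\<^sup>T + lam \<cdot>\<^sub>m 1\<^sub>m (card S))"
    and "b < dim_col (rows_sel X S * (rows_sel X S)\<^sup>T + lam \<cdot>\<^sub>m 1\<^sub>m (card S))"
  then have a: "a < card S" and b: "b < card S" using XS by auto
  have "pick S a < N" "pick S b < N" using pick_in_set_le[OF a] pick_in_set_le[OF b] S by auto
  moreover have "pick S a = pick S b \<longleftrightarrow> a = b" using a b by (metis pick_index_pick)
  ultimately show "sub_sq (Pxx X lam) S $$ (a, b)
      = (rows_sel X S * (rows_sel X S)\<^sup>T + lam \<cdot>\<^sub>m 1\<^sub>m (card S)) $$ (a, b)"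
    unfolding sub_sq_index[OF Pxx_carrier[OF X] S a b] using X XS a b
    by (simp add: Pxx_def row_rows_sel[OF X S])
qed (use sub_sq_carrier[OF Pxx_carrier[OF X] S] rows_sel_carrier[OF X S] in auto)

lemma Qxx_diag:
  assumes X: "X \<in> carrier_mat N M" and S: "S \<subseteq> {0..<N}"
    and det: "det (sub_sq (Pxx X lam) S) \<noteq> 0" and i: "i < N"
  shows "Qxx X lam S $$ (i, i) = schur_complement (\<lambda>r c. Pxx X lam $$ (r, c)) N
           (embed_sub_sq S (minv (sub_sq (Pxx X lam) S))) i"
proof -
  have P: "Pxx X lam \<in> carrier_mat N N" by (rule Pxx_carrier[OF X])
  have A: "minv (sub_sq (Pxx X lam) S) \<in> carrier_mat (card S) (card S)"
    by (rule minv_inverse(1)[OF sub_sq_carrier[OF P S] det])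
  have "Qxx X lam S $$ (i, i)
      = Pxx X lam $$ (i, i) - ((rows_sel (Pxx X lam) S)\<^sup>T * minv (sub_sq (Pxx X lam) S) * rows_sel (Pxx X lam) S) $$ (i, i)"
  proof (cases "S = {}")
    case True
    then show ?thesis unfolding Qxx_def using P rows_sel_carrier[OF P S] i A by (simp add: scalar_prod_def)
  next
    case False
    then show ?thesis unfolding Qxx_def using P i rows_sel_carrier[OF P S] A by simp
  qed
  then show ?thesis
    unfolding rows_sel_bilinear_index[OF P P S A i i] schur_complement_def .
qed

lemma Qxy_index:
  assumes X: "X \<in> carrier_mat N M" and Y: "Y \<in> carrier_mat Ny M" and S: "S \<subseteq> {0..<N}"
    and det: "det (sub_sq (Pxx X lam) S) \<noteq> 0" and i: "i < N" and j: "j < Ny"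
  shows "Qxy X Y lam S $$ (i, j) = Pxy X Y $$ (i, j)
     - (\<Sum>r<N. \<Sum>c<N. Pxx X lam $$ (r, i) * embed_sub_sq S (minv (sub_sq (Pxx X lam) S)) r c * Pxy X Y $$ (c, j))"
proof -
  have P: "Pxx X lam \<in> carrier_mat N N" by (rule Pxx_carrier[OF X])
  have B: "Pxy X Y \<in> carrier_mat N Ny" by (rule Pxy_carrier[OF X Y])
  have A: "minv (sub_sq (Pxx X lam) S) \<in> carrier_mat (card S) (card S)"
    by (rule minv_inverse(1)[OF sub_sq_carrier[OF P S] det])
  have "Qxy X Y lam S $$ (i, j)
      = Pxy X Y $$ (i, j) - ((rows_sel (Pxx X lam) S)\<^sup>T * minv (sub_sq (Pxx X lam) S) * rows_sel (Pxy X Y) S) $$ (i, j)"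
  proof (cases "S = {}")
    case True
    then show ?thesis unfolding Qxy_def using B rows_sel_carrier[OF P S] rows_sel_carrier[OF B S] i j
      by (simp add: scalar_prod_def)
  next
    case False
    then show ?thesis unfolding Qxy_def using B i j rows_sel_carrier[OF P S] rows_sel_carrier[OF B S] A by simp
  qed
  then show ?thesis
    unfolding rows_sel_bilinear_index[OF P B S A i j] .
qed

lemma Qxy_carrier:
  assumes X: "X \<in> carrier_mat N M" and Y: "Y \<in> carrier_mat Ny M" and S: "S \<subseteq> {0..<N}"
  shows "Qxy X Y lam S \<in> carrier_mat N Ny"
  using Pxy_carrier[OF X Y] rows_sel_carrier[OF Pxx_carrier[OF X] S]
    rows_sel_carrier[OF Pxy_carrier[OF X Y] S]
  unfolding Qxy_def carrier_mat_def by (simp add: minus_mat_def)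

lemma Jfun_eq:
  assumes X: "X \<in> carrier_mat N M" and Y: "Y \<in> carrier_mat Ny M" and S: "S \<subseteq> {0..<N}"
    and det: "det (sub_sq (Pxx X lam) S) \<noteq> 0"
  shows "Jfun X Y lam S = (\<Sum>j<Ny. \<Sum>r<N. \<Sum>c<N.
      Pxy X Y $$ (r, j) * embed_sub_sq S (minv (sub_sq (Pxx X lam) S)) r c * Pxy X Y $$ (c, j))"
proof (cases "S = {}")
  case True
  then show ?thesis unfolding Jfun_def by (simp add: embed_sub_sq_def)
next
  case False
  let ?A = "minv (sub_sq (Pxx X lam) S)"
  let ?XS = "rows_sel X S"
  let ?BS = "rows_sel (Pxy X Y) S"
  have P: "Pxx X lam \<in> carrier_mat N N" by (rule Pxx_carrier[OF X])
  have B: "Pxy X Y \<in> carrier_mat N Ny" by (rule Pxy_carrier[OF X Y])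
  have A: "?A \<in> carrier_mat (card S) (card S)"
    by (rule minv_inverse(1)[OF sub_sq_carrier[OF P S] det])
  have XS: "?XS \<in> carrier_mat (card S) M" by (rule rows_sel_carrier[OF X S])
  have BS: "?BS = ?XS * Y\<^sup>T"
    unfolding Pxy_def using X Y S by (intro rows_sel_mult) auto
  have "Y * ?XS\<^sup>T * ?A * ?XS * Y\<^sup>T = ?BS\<^sup>T * ?A * ?BS"
    unfolding BS using XS Y A by (simp add: transpose_mult assoc_mult_mat[of _ Ny "card S" _ M _ Ny])
  then have "Jfun X Y lam S = mtrace (?BS\<^sup>T * ?A * ?BS)"
    unfolding Jfun_def using False sub_sq_Pxx[OF X S] by simp
  also have "\<dots> = (\<Sum>j<Ny. (?BS\<^sup>T * ?A * ?BS) $$ (j, j))"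
    unfolding mtrace_def using rows_sel_carrier[OF B S] by simp
  also have "\<dots> = (\<Sum>j<Ny. \<Sum>r<N. \<Sum>c<N. Pxy X Y $$ (r, j) * embed_sub_sq S ?A r c * Pxy X Y $$ (c, j))"
    by (intro sum.cong refl) (simp add: rows_sel_bilinear_index[OF B B S A])
  finally show ?thesis .
qed

lemma vnorm_row_sq:
  assumes "Q \<in> carrier_mat n m" and "i < n"
  shows "(vnorm (row Q i))\<^sup>2 = (\<Sum>j<m. (Q $$ (i, j))\<^sup>2)"
proof -
  have "row Q i \<bullet> row Q i = (\<Sum>j<m. (Q $$ (i, j))\<^sup>2)"
    using assms by (simp add: scalar_prod_def lessThan_atLeast0 power2_eq_square)
  moreover have "(\<Sum>j<m. (Q $$ (i, j))\<^sup>2) \<ge> 0" by (simp add: sum_nonneg)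
  ultimately show ?thesis unfolding vnorm_def by simp
qed

theorem theorem1:
  fixes N Ny M :: nat and X Y :: "real mat" and lam :: real and S :: "nat set" and i :: nat
  assumes "X \<in> carrier_mat N M"
    and "Y \<in> carrier_mat Ny M"
    and "lam \<ge> 0"
    and "S \<subseteq> {0..<N}"
    and "i \<in> {0..<N} - S"
    and "pos_def (sub_sq (Pxx X lam) (insert i S))"
  shows "Jfun X Y lam (insert i S) - Jfun X Y lam S
           = (vnorm (row (Qxy X Y lam S) i))\<^sup>2 / (Qxx X lam S $$ (i,i))"
proof -
  note X = assms(1) and Y = assms(2) and S = assms(4)
  let ?p = "\<lambda>r c. Pxx X lam $$ (r, c)"
  let ?G = "embed_sub_sq S (minv (sub_sq (Pxx X lam) S))"
  have P: "Pxx X lam \<in> carrier_mat N N" by (rule Pxx_carrier[OF X])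
  have i: "i < N" "i \<notin> S" and T: "insert i S \<subseteq> {0..<N}" using assms(5) S by auto
  have pdT: "pos_def_on ?p N (insert i S)" by (rule pos_def_on_if_pos_def_sub_sq[OF P T assms(6)])
  have pdS: "pos_def_on ?p N S" using pdT by (rule pos_def_on_subset) auto
  note detS = det_sub_sq_nonzero_if_pos_def_on[OF P S pdS]
  note detT = det_sub_sq_nonzero_if_pos_def_on[OF P T pdT]
  have "Jfun X Y lam (insert i S) - Jfun X Y lam S
      = (\<Sum>j<Ny. (Pxy X Y $$ (i, j) - (\<Sum>r<N. \<Sum>c<N. ?p r i * ?G r c * Pxy X Y $$ (c, j)))\<^sup>2)
        / schur_complement ?p N ?G i"
    unfolding Jfun_eq[OF X Y S detS] Jfun_eq[OF X Y T detT]
    by (rule sum_quad_support_inverse_insert[OF Pxx_sym[OF X] S i support_inverse_minv[OF P S detS]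
          pdT support_inverse_minv[OF P T detT]])
  also have "\<dots> = (vnorm (row (Qxy X Y lam S) i))\<^sup>2 / (Qxx X lam S $$ (i,i))"
    by (simp add: vnorm_row_sq[OF Qxy_carrier[OF X Y S] i(1)] Qxy_index[OF X Y S detS i(1)]
        Qxx_diag[OF X S detS i(1)])
  finally show ?thesis .
qed

end
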